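(* Let $\mathcal{P}$ satisfy properties (a)–(f). For every ordering $e_1,\ldots,e_N$ of the edges of $K_n$ and every $t\in[N]$, $R(t)\le \mathrm{ex}(G(n,t))$.
   Context: All graphs are vertex-labelled, simple and undirected. Let $\mathcal{P}$ be a class of graphs such that: (a) $\mathcal{P}$ is not the class of all graphs; (b) it contains all edgeless graphs; (c) it is closed under isomorphism; (d) it is closed under taking minors; (e) it is weakly addable, i.e. if $G\in\mathcal{P}$ and $u,v$ lie in different components of $G$ then $G+uv\in\mathcal{P}$; (f) if $G\in\mathcal{P}$ and $u,v$ are non-adjacent vertices in the same component of $G$ which is a tree, then $G+uv\in\mathcal{P}$. Let $N=\binom{n}{2}$. Given an ordering $e_1,\ldots,e_N$ of the edges of $K_n$: $P(n,0)$ is the empty graph on $[n]$; for $t\in[N]$, $P(n,t)=P(n,t-1)+e_t$ if $P(n,t-1)+e_t\in\mathcal{P}$ ($e_t$ accepted), and $P(n,t)=P(n,t-1)$ otherwise ($e_t$ rejected). $R(t):=t-e(P(n,t))$ where $e(H)$ is the number of edges. $G(n,t)$ is the graph on $[n]$ with edge set $\{e_1,\ldots,e_t\}$. The excess of a graph $H$ is $\mathrm{ex}(H):=e(H)-|V(H)|+\kappa(H)$, where $\kappa(H)$ is the number of tree components of $H$. *)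

theory Defs
  imports Main
begin

type_synonym graph = "nat set \<times> nat set set"

definition verts :: "graph \<Rightarrow> nat set" where "verts G = fst G"
definition edges :: "graph \<Rightarrow> nat set set" where "edges G = snd G"

definition wf_graph :: "graph \<Rightarrow> bool" where
  "wf_graph G \<longleftrightarrow> finite (verts G) \<and>
     (\<forall>e\<in>edges G. \<exists>u v. e = {u, v} \<and> u \<noteq> v \<and> u \<in> verts G \<and> v \<in> verts G)"

definition all_graphs :: "graph set" where "all_graphs = {G. wf_graph G}"

definition adj_in :: "graph \<Rightarrow> nat set \<Rightarrow> (nat \<times> nat) set" where
  "adj_in G S = {(x, y). x \<in> S \<and> y \<in> S \<and> {x, y} \<in> edges G}"

definition connected_set :: "graph \<Rightarrow> nat set \<Rightarrow> bool" where
  "connected_set G S \<longleftrightarrow> S \<noteq> {} \<and> (\<forall>x\<in>S. \<forall>y\<in>S. (x, y) \<in> (adj_in G S)\<^sup>*)"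

text \<open>H is a minor of G (up to isomorphism): model of H via disjoint connected branch sets.\<close>
definition is_minor :: "graph \<Rightarrow> graph \<Rightarrow> bool" where
  "is_minor H G \<longleftrightarrow> (\<exists>f :: nat \<Rightarrow> nat set.
      (\<forall>h\<in>verts H. f h \<subseteq> verts G \<and> connected_set G (f h)) \<and>
      (\<forall>h\<in>verts H. \<forall>h'\<in>verts H. h \<noteq> h' \<longrightarrow> f h \<inter> f h' = {}) \<and>
      (\<forall>h\<in>verts H. \<forall>h'\<in>verts H. {h, h'} \<in> edges H \<longrightarrow>
          (\<exists>u\<in>f h. \<exists>v\<in>f h'. {u, v} \<in> edges G)))"

definition same_comp :: "graph \<Rightarrow> nat \<Rightarrow> nat \<Rightarrow> bool" where
  "same_comp G u v \<longleftrightarrow> u \<in> verts G \<and> v \<in> verts G \<and> (u, v) \<in> (adj_in G (verts G))\<^sup>*"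

definition comp_of :: "graph \<Rightarrow> nat \<Rightarrow> nat set" where
  "comp_of G v = {w. same_comp G v w}"

definition components :: "graph \<Rightarrow> nat set set" where
  "components G = comp_of G ` verts G"

text \<open>A component C (connected) is a tree iff it has exactly |C| - 1 edges.\<close>
definition is_tree_comp :: "graph \<Rightarrow> nat set \<Rightarrow> bool" where
  "is_tree_comp G C \<longleftrightarrow> card {e\<in>edges G. e \<subseteq> C} + 1 = card C"

definition num_tree_comps :: "graph \<Rightarrow> nat" where
  "num_tree_comps G = card {C\<in>components G. is_tree_comp G C}"

definition excess :: "graph \<Rightarrow> int" where
  "excess G = int (card (edges G)) - int (card (verts G)) + int (num_tree_comps G)"

definition add_edge :: "graph \<Rightarrow> nat \<Rightarrow> nat \<Rightarrow> graph" where
  "add_edge G u v = (verts G, insert {u, v} (edges G))"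

definition good_class :: "graph set \<Rightarrow> bool" where
  "good_class P \<longleftrightarrow>
     P \<subseteq> all_graphs \<and>
     P \<noteq> all_graphs \<and>
     (\<forall>V. finite V \<longrightarrow> (V, {}) \<in> P) \<and>
     (\<forall>G\<in>P. \<forall>f V'. bij_betw f (verts G) V' \<longrightarrow> (V', (\<lambda>e. f ` e) ` edges G) \<in> P) \<and>
     (\<forall>G\<in>P. \<forall>H. wf_graph H \<and> is_minor H G \<longrightarrow> H \<in> P) \<and>
     (\<forall>G\<in>P. \<forall>u\<in>verts G. \<forall>v\<in>verts G. \<not> same_comp G u v \<longrightarrow> add_edge G u v \<in> P) \<and>
     (\<forall>G\<in>P. \<forall>u\<in>verts G. \<forall>v\<in>verts G. u \<noteq> v \<and> {u, v} \<notin> edges G \<and> same_comp G u v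
          \<and> is_tree_comp G (comp_of G u) \<longrightarrow> add_edge G u v \<in> P)"

definition Kn_edges :: "nat \<Rightarrow> nat set set" where
  "Kn_edges n = {e. \<exists>u v. e = {u, v} \<and> u \<noteq> v \<and> u \<in> {1..n} \<and> v \<in> {1..n}}"

text \<open>An ordering e_1..e_N of the edges of K_n is a list es with es ! (t-1) = e_t.
  proc_edges P n es t is the edge set of P(n,t).\<close>
primrec proc_edges :: "graph set \<Rightarrow> nat \<Rightarrow> nat set list \<Rightarrow> nat \<Rightarrow> nat set set" where
  "proc_edges P n es 0 = {}"
| "proc_edges P n es (Suc t) =
     (if ({1..n}, insert (es ! t) (proc_edges P n es t)) \<in> P
      then insert (es ! t) (proc_edges P n es t)
      else proc_edges P n es t)"

definition R_rej :: "graph set \<Rightarrow> nat \<Rightarrow> nat set list \<Rightarrow> nat \<Rightarrow> int" where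
  "R_rej P n es t = int t - int (card (proc_edges P n es t))"

definition Gnt :: "nat \<Rightarrow> nat set list \<Rightarrow> nat \<Rightarrow> graph" where
  "Gnt n es t = ({1..n}, set (take t es))"

end

theory Submission
  imports Defs
begin

text \<open>
  Every rejected edge joins two vertices of one component of the current graph \<open>P(n,s)\<close>
  that is not a tree (otherwise (e) or (f) would have allowed it). Hence \<open>G(n,t)\<close> and
  \<open>P(n,t)\<close> have the same components, and a component \<open>C\<close> that is not a tree in \<open>G(n,t)\<close>
  either has the same edges in \<open>P(n,t)\<close>, or contains a non-tree component of an earlier
  \<open>P(n,s)\<close>; in both cases \<open>C\<close> spans at least \<open>|C|\<close> edges of \<open>P(n,t)\<close>. Summing over the
  components gives \<open>n \<le> e(P(n,t)) + \<kappa>(G(n,t))\<close>, which is the claim since \<open>e(G(n,t)) = t\<close>.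
\<close>

definition edges_within :: "'a set set \<Rightarrow> 'a set \<Rightarrow> 'a set set" where
  "edges_within E S = {e\<in>E. e \<subseteq> S}"

lemma is_tree_comp_iff: "is_tree_comp G C \<longleftrightarrow> card (edges_within (edges G) C) + 1 = card C"
  by (simp add: is_tree_comp_def edges_within_def)

lemma finite_edges_within: "finite E \<Longrightarrow> finite (edges_within E S)"
  by (simp add: edges_within_def)

lemma edges_within_mono: "E \<subseteq> E' \<Longrightarrow> edges_within E S \<subseteq> edges_within E' S"
  by (auto simp: edges_within_def)

text \<open>
  Every vertex of \<open>C - D\<close> is joined by a step of \<open>R\<close> to a vertex strictly closer to \<open>D\<close>;
  these steps give distinct edges outside \<open>D\<close>.
\<close>
lemma card_edges_within_add_card_Diff_le:
  fixes R :: "('a \<times> 'a) set"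
  assumes edge: "\<And>x y. (x, y) \<in> R \<Longrightarrow> {x, y} \<in> E"
    and reach: "\<And>x. x \<in> C \<Longrightarrow> \<exists>d\<in>D. (x, d) \<in> R\<^sup>*"
    and closed: "\<And>x y. x \<in> C \<Longrightarrow> (x, y) \<in> R \<Longrightarrow> y \<in> C"
    and "D \<subseteq> C" "finite C" "finite E"
  shows "card (edges_within E D) + card (C - D) \<le> card (edges_within E C)"
proof -
  define dist where "dist x = (LEAST k. \<exists>d\<in>D. (x, d) \<in> R ^^ k)" for x
  have dist: "\<exists>d\<in>D. (x, d) \<in> R ^^ dist x" if "x \<in> C" for x
  proof -
    from reach[OF that] have "\<exists>k. \<exists>d\<in>D. (x, d) \<in> R ^^ k" using rtrancl_power by blast
    then show ?thesis unfolding dist_def by (rule LeastI_ex)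
  qed
  have parent: "\<exists>y. (x, y) \<in> R \<and> y \<in> C \<and> dist y < dist x" if x: "x \<in> C - D" for x
  proof -
    obtain d where d: "d \<in> D" "(x, d) \<in> R ^^ dist x" using dist x by blast
    with x obtain m where m: "dist x = Suc m" by (cases "dist x") auto
    with d obtain y where y: "(x, y) \<in> R" "(y, d) \<in> R ^^ m" by (metis relpow_Suc_D2)
    have "dist y \<le> m" unfolding dist_def using y d by (blast intro: Least_le)
    then show ?thesis using y m closed x by auto
  qed
  then obtain p where p: "\<And>x. x \<in> C - D \<Longrightarrow> (x, p x) \<in> R \<and> p x \<in> C \<and> dist (p x) < dist x"
    by metis
  define f where "f x = {x, p x}" for x
  have "inj_on f (C - D)"
  proof (rule inj_onI)
    fix x y assume xy: "x \<in> C - D" "y \<in> C - D" "f x = f y"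
    show "x = y"
    proof (rule ccontr)
      assume "x \<noteq> y"
      with xy(3) have "p x = y" "p y = x" by (auto simp: f_def doubleton_eq_iff)
      then show False using p[OF xy(1)] p[OF xy(2)] by simp
    qed
  qed
  then have "card (edges_within E D) + card (C - D) = card (edges_within E D) + card (f ` (C - D))"
    by (simp add: card_image)
  also have "\<dots> = card (edges_within E D \<union> f ` (C - D))"
    using \<open>finite C\<close> \<open>finite E\<close>
    by (intro card_Un_disjoint[symmetric]) (auto simp: f_def edges_within_def)
  also have "\<dots> \<le> card (edges_within E C)"
    using p edge \<open>D \<subseteq> C\<close> \<open>finite E\<close>
    by (intro card_mono finite_edges_within) (fastforce simp: f_def edges_within_def)+
  finally show ?thesis .
qed

lemma finite_edges: "wf_graph G \<Longrightarrow> finite (edges G)"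
  unfolding wf_graph_def by (rule finite_subset[of _ "Pow (verts G)"]) auto

lemma adj_in_mono: "E \<subseteq> E' \<Longrightarrow> adj_in (V, E) S \<subseteq> adj_in (V', E') S"
  unfolding adj_in_def edges_def by auto

lemma sym_adj_in: "sym (adj_in G S)"
  unfolding sym_def adj_in_def by (auto simp: insert_commute)

lemma rtrancl_adj_in_sym: "(x, y) \<in> (adj_in G S)\<^sup>* \<Longrightarrow> (y, x) \<in> (adj_in G S)\<^sup>*"
  using sym_rtrancl[OF sym_adj_in] unfolding sym_def by blast

lemma same_comp_sym: "same_comp G u v \<Longrightarrow> same_comp G v u"
  by (auto simp: same_comp_def intro: rtrancl_adj_in_sym)

lemma same_comp_mono:
  "A' \<subseteq> A \<Longrightarrow> same_comp (V, A') u v \<Longrightarrow> same_comp (V, A) u v"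
  unfolding same_comp_def verts_def
  by (auto dest: rtrancl_mono[OF adj_in_mono[of A' A V V V]])

lemma mem_comp_of_iff:
  "w \<in> comp_of G r \<longleftrightarrow> r \<in> verts G \<and> w \<in> verts G \<and> (r, w) \<in> (adj_in G (verts G))\<^sup>*"
  by (simp add: comp_of_def same_comp_def)

lemma comp_of_self: "r \<in> verts G \<Longrightarrow> r \<in> comp_of G r"
  by (simp add: mem_comp_of_iff)

lemma comp_of_subset: "comp_of G r \<subseteq> verts G"
  by (auto simp: mem_comp_of_iff)

lemma finite_comp_of: "finite (verts G) \<Longrightarrow> finite (comp_of G r)"
  using finite_subset[OF comp_of_subset] .

lemma comp_of_closed: "x \<in> comp_of G r \<Longrightarrow> (x, y) \<in> adj_in G (verts G) \<Longrightarrow> y \<in> comp_of G r"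
  unfolding mem_comp_of_iff by (auto simp: adj_in_def intro: rtrancl_into_rtrancl)

lemma comp_of_eq: "w \<in> comp_of G r \<Longrightarrow> comp_of G w = comp_of G r"
  unfolding mem_comp_of_iff set_eq_iff
  by (meson rtrancl_adj_in_sym rtrancl_trans mem_comp_of_iff)

lemma comp_of_supergraph_eq:
  assumes "A \<subseteq> B"
    and connected: "\<And>x y. x \<in> V \<Longrightarrow> y \<in> V \<Longrightarrow> {x, y} \<in> B \<Longrightarrow> same_comp (V, A) x y"
  shows "comp_of (V, B) = comp_of (V, A)"
proof -
  have "(adj_in (V, B) V)\<^sup>* = (adj_in (V, A) V)\<^sup>*"
  proof
    show "(adj_in (V, A) V)\<^sup>* \<subseteq> (adj_in (V, B) V)\<^sup>*"
      using \<open>A \<subseteq> B\<close> by (intro rtrancl_mono adj_in_mono)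
    show "(adj_in (V, B) V)\<^sup>* \<subseteq> (adj_in (V, A) V)\<^sup>*"
      using connected by (intro rtrancl_subset_rtrancl)
        (auto simp: adj_in_def same_comp_def verts_def edges_def)
  qed
  then show ?thesis
    by (simp add: comp_of_def same_comp_def verts_def fun_eq_iff)
qed

lemma card_verts_eq_sum_components:
  assumes "finite (verts G)"
  shows "card (verts G) = (\<Sum>C\<in>components G. card C)"
proof -
  have "\<Union>(components G) = verts G"
    using comp_of_subset comp_of_self by (fastforce simp: components_def)
  moreover have "pairwise disjnt (components G)"
    by (auto simp: pairwise_def disjnt_def components_def dest: comp_of_eq)
  moreover have "\<forall>C\<in>components G. finite C"
    using finite_comp_of[OF assms] by (auto simp: components_def)
  ultimately show ?thesis
    using card_Union_disjoint[of "components G"] by simp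
qed

lemma card_edges_eq_sum_components:
  assumes "wf_graph G"
  shows "card (edges G) = (\<Sum>C\<in>components G. card (edges_within (edges G) C))"
proof -
  have "edges G = (\<Union>C\<in>components G. edges_within (edges G) C)"
  proof (intro equalityI subsetI)
    fix e assume e: "e \<in> edges G"
    with assms obtain u v where uv: "e = {u, v}" "u \<in> verts G" "v \<in> verts G"
      by (auto simp: wf_graph_def)
    with e have "(u, v) \<in> adj_in G (verts G)" by (simp add: adj_in_def)
    with uv have "e \<subseteq> comp_of G u"
      by (auto simp: mem_comp_of_iff)
    with e uv show "e \<in> (\<Union>C\<in>components G. edges_within (edges G) C)"
      by (auto simp: components_def edges_within_def)
  qed (auto simp: edges_within_def)
  moreover have "edges_within (edges G) C \<inter> edges_within (edges G) C' = {}"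
    if "C \<in> components G" "C' \<in> components G" "C \<noteq> C'" for C C'
  proof -
    have "C \<inter> C' = {}"
      using that by (auto simp: components_def dest: comp_of_eq)
    moreover have "e \<noteq> {}" if "e \<in> edges G" for e
      using assms that by (auto simp: wf_graph_def)
    ultimately show ?thesis unfolding edges_within_def by blast
  qed
  moreover have "finite (components G)"
    using assms by (simp add: components_def wf_graph_def)
  ultimately show ?thesis
    using assms finite_edges by (subst card_UN_disjoint[symmetric]) (auto simp: edges_within_def)
qed

lemma card_comp_of_le:
  assumes "finite (verts G)" "finite (edges G)" "r \<in> verts G"
  shows "card (comp_of G r) \<le> card (edges_within (edges G) (comp_of G r)) + 1"
proof -
  let ?C = "comp_of G r"
  have "r \<in> ?C" "finite ?C"
    using comp_of_self[OF assms(3)] finite_comp_of[OF assms(1)] by auto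
  moreover have "card (edges_within (edges G) {r}) + card (?C - {r})
      \<le> card (edges_within (edges G) ?C)"
  proof (rule card_edges_within_add_card_Diff_le[where R = "adj_in G (verts G)"])
    show "\<exists>d\<in>{r}. (x, d) \<in> (adj_in G (verts G))\<^sup>*" if "x \<in> ?C" for x
      using that by (auto simp: mem_comp_of_iff intro: rtrancl_adj_in_sym)
  qed (use assms \<open>finite ?C\<close> \<open>r \<in> ?C\<close> comp_of_closed in \<open>auto simp: adj_in_def\<close>)
  ultimately show ?thesis by simp
qed

lemma card_comp_of_le_if_contains_non_tree:
  assumes "finite V" "finite A" "A' \<subseteq> A" "r \<in> V" "u \<in> V"
    and u: "u \<in> comp_of (V, A) r"
    and non_tree: "\<not> is_tree_comp (V, A') (comp_of (V, A') u)"
  shows "card (comp_of (V, A) r) \<le> card (edges_within A (comp_of (V, A) r))"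
proof -
  let ?C = "comp_of (V, A) r" and ?D = "comp_of (V, A') u"
  have "finite A'" using assms finite_subset by blast
  then have "card ?D \<le> card (edges_within A' ?D) + 1"
    using card_comp_of_le[of "(V, A')" u] assms by (simp add: verts_def edges_def)
  with non_tree have "card ?D \<le> card (edges_within A' ?D)"
    by (simp add: is_tree_comp_iff edges_def)
  also have "\<dots> \<le> card (edges_within A ?D)"
    using assms by (intro card_mono finite_edges_within edges_within_mono)
  finally have D: "card ?D \<le> card (edges_within A ?D)" .
  have "?D \<subseteq> ?C"
  proof
    fix w assume "w \<in> ?D"
    then have "w \<in> comp_of (V, A) u"
      using same_comp_mono[OF \<open>A' \<subseteq> A\<close>] by (simp add: comp_of_def)
    then show "w \<in> ?C" by (simp add: comp_of_eq[OF u])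
  qed
  have "finite ?C" using finite_comp_of[of "(V, A)"] assms by (simp add: verts_def)
  have "u \<in> ?D" using assms by (simp add: comp_of_self verts_def)
  have "card (edges_within A ?D) + card (?C - ?D) \<le> card (edges_within A ?C)"
  proof (rule card_edges_within_add_card_Diff_le[where R = "adj_in (V, A) V"])
    show "\<exists>d\<in>?D. (x, d) \<in> (adj_in (V, A) V)\<^sup>*" if "x \<in> ?C" for x
    proof
      have "x \<in> comp_of (V, A) u" using that comp_of_eq[OF u] by simp
      then show "(x, u) \<in> (adj_in (V, A) V)\<^sup>*"
        by (auto simp: mem_comp_of_iff verts_def intro: rtrancl_adj_in_sym)
    qed (rule \<open>u \<in> ?D\<close>)
  qed (use comp_of_closed[of _ "(V, A)" r] \<open>?D \<subseteq> ?C\<close> \<open>finite ?C\<close> assms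
      in \<open>auto simp: adj_in_def edges_def verts_def\<close>)
  moreover have "card ?C = card ?D + card (?C - ?D)"
    using \<open>?D \<subseteq> ?C\<close> \<open>finite ?C\<close> by (simp add: card_Diff_subset card_mono finite_subset)
  ultimately show ?thesis using D by linarith
qed

lemma card_verts_le_card_edges_add_num_tree_comps:
  assumes wf: "wf_graph (V, B)" and "A \<subseteq> B"
    and closes_cycle: "\<And>e. e \<in> B - A \<Longrightarrow> \<exists>A' u v. A' \<subseteq> A \<and> e = {u, v} \<and>
        same_comp (V, A') u v \<and> \<not> is_tree_comp (V, A') (comp_of (V, A') u)"
  shows "card V \<le> card A + num_tree_comps (V, B)"
proof -
  have wfA: "wf_graph (V, A)"
    using wf \<open>A \<subseteq> B\<close> by (auto simp: wf_graph_def verts_def edges_def)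
  have finite: "finite V" "finite A" "finite B"
    using wf wfA finite_edges by (auto simp: wf_graph_def verts_def edges_def)
  have same_comps: "comp_of (V, B) = comp_of (V, A)"
  proof (rule comp_of_supergraph_eq[OF \<open>A \<subseteq> B\<close>])
    fix x y assume "x \<in> V" "y \<in> V" "{x, y} \<in> B"
    show "same_comp (V, A) x y"
    proof (cases "{x, y} \<in> A")
      case True
      with \<open>x \<in> V\<close> \<open>y \<in> V\<close> show ?thesis
        by (auto simp: same_comp_def adj_in_def verts_def edges_def)
    next
      case False
      with \<open>{x, y} \<in> B\<close> have "{x, y} \<in> B - A" by simp
      from closes_cycle[OF this] obtain A' u v where
        A': "A' \<subseteq> A" and xy: "{x, y} = {u, v}" and uv: "same_comp (V, A') u v" by blast
      have "same_comp (V, A) u v" using same_comp_mono[OF A' uv] .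
      with xy same_comp_sym[of "(V, A)" u v] show ?thesis by (auto simp: doubleton_eq_iff)
    qed
  qed
  then have comps: "components (V, B) = components (V, A)"
    by (simp add: components_def verts_def)
  have per_comp: "card C \<le> card (edges_within A C) + (if is_tree_comp (V, B) C then 1 else 0)"
    if C: "C \<in> components (V, A)" for C
  proof -
    obtain r where r: "r \<in> V" "C = comp_of (V, A) r"
      using C by (auto simp: components_def verts_def)
    have bound: "card C \<le> card (edges_within A C) + 1"
      using card_comp_of_le[of "(V, A)" r] r finite by (simp add: verts_def edges_def)
    show ?thesis
    proof (cases "is_tree_comp (V, B) C \<or> edges_within B C = edges_within A C")
      case True
      with bound show ?thesis by (auto simp: is_tree_comp_iff edges_def)
    next
      case False
      with \<open>A \<subseteq> B\<close> obtain e where "e \<in> B - A" "e \<subseteq> C"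
        by (auto simp: edges_within_def)
      from closes_cycle[OF \<open>e \<in> B - A\<close>] obtain A' u v where
        "A' \<subseteq> A" "e = {u, v}" "same_comp (V, A') u v"
        "\<not> is_tree_comp (V, A') (comp_of (V, A') u)" by blast
      moreover from this \<open>e \<subseteq> C\<close> r have "u \<in> comp_of (V, A) r" "u \<in> V"
        by (auto simp: same_comp_def verts_def)
      ultimately show ?thesis
        using card_comp_of_le_if_contains_non_tree[of V A A' r u] finite r False by simp
    qed
  qed
  have "card V = (\<Sum>C\<in>components (V, A). card C)"
    using card_verts_eq_sum_components[of "(V, A)"] finite by (simp add: verts_def)
  also have "\<dots> \<le> (\<Sum>C\<in>components (V, A).
      card (edges_within A C) + (if is_tree_comp (V, B) C then 1 else 0))"
    using per_comp by (rule sum_mono)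
  also have "\<dots> = card A + num_tree_comps (V, B)"
  proof -
    have "finite (components (V, A))"
      using finite by (simp add: components_def verts_def)
    then have "num_tree_comps (V, B) =
        (\<Sum>C\<in>components (V, A). if is_tree_comp (V, B) C then 1 else 0)"
      by (simp add: num_tree_comps_def comps sum.inter_filter[symmetric])
    then show ?thesis
      using card_edges_eq_sum_components[OF wfA] by (simp add: sum.distrib edges_def)
  qed
  finally show ?thesis .
qed

lemma proc_edges_mono: "s \<le> s' \<Longrightarrow> proc_edges P n es s \<subseteq> proc_edges P n es s'"
  by (rule lift_Suc_mono_le[of "proc_edges P n es"]) auto

lemma proc_edges_subset_take: "s \<le> length es \<Longrightarrow> proc_edges P n es s \<subseteq> set (take s es)"
  by (induction s) (auto simp: take_Suc_conv_app_nth)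

lemma proc_edges_in_class: "good_class P \<Longrightarrow> ({1..n}, proc_edges P n es s) \<in> P"
  by (induction s) (auto simp: good_class_def)

lemma good_class_add_edge_between_comps:
  "good_class P \<Longrightarrow> G \<in> P \<Longrightarrow> u \<in> verts G \<Longrightarrow> v \<in> verts G \<Longrightarrow> \<not> same_comp G u v
    \<Longrightarrow> add_edge G u v \<in> P"
  unfolding good_class_def by blast

lemma good_class_add_edge_in_tree_comp:
  "good_class P \<Longrightarrow> G \<in> P \<Longrightarrow> u \<in> verts G \<Longrightarrow> v \<in> verts G \<Longrightarrow> u \<noteq> v \<Longrightarrow> {u, v} \<notin> edges G
    \<Longrightarrow> same_comp G u v \<Longrightarrow> is_tree_comp G (comp_of G u) \<Longrightarrow> add_edge G u v \<in> P"
  unfolding good_class_def by blast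

lemma rejected_edge_closes_cycle:
  assumes P: "good_class P" and "distinct es" "set es = Kn_edges n" "s < length es"
    and rejected: "es ! s \<notin> proc_edges P n es (Suc s)"
  defines "G \<equiv> ({1..n}, proc_edges P n es s)"
  shows "\<exists>u v. es ! s = {u, v} \<and> same_comp G u v \<and> \<not> is_tree_comp G (comp_of G u)"
proof -
  have "es ! s \<in> Kn_edges n" using assms nth_mem by blast
  then obtain u v where uv: "es ! s = {u, v}" "u \<noteq> v" "u \<in> verts G" "v \<in> verts G"
    by (auto simp: Kn_edges_def G_def verts_def)
  have G: "G \<in> P" using proc_edges_in_class[OF P] by (simp add: G_def)
  have rejected_G: "add_edge G u v \<notin> P"
    using rejected uv(1) by (auto simp: G_def add_edge_def verts_def edges_def split: if_splits)
  have "es ! s \<in> set (drop s es)"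
    using \<open>s < length es\<close> by (simp add: Cons_nth_drop_Suc[symmetric])
  then have "{u, v} \<notin> edges G"
    using proc_edges_subset_take[of s es P n] set_take_disj_set_drop_if_distinct[of es s s]
      assms uv(1) by (auto simp: G_def edges_def)
  moreover have "same_comp G u v"
    using good_class_add_edge_between_comps[OF P G uv(3,4)] rejected_G by blast
  ultimately have "\<not> is_tree_comp G (comp_of G u)"
    using good_class_add_edge_in_tree_comp[OF P G uv(3,4,2)] rejected_G by blast
  with uv(1) \<open>same_comp G u v\<close> show ?thesis by blast
qed

lemma rejected_edges_close_cycles:
  assumes "good_class P" "distinct es" "set es = Kn_edges n" "t \<le> length es"
    and e: "e \<in> set (take t es) - proc_edges P n es t"
  shows "\<exists>A' u v. A' \<subseteq> proc_edges P n es t \<and> e = {u, v} \<and>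
    same_comp ({1..n}, A') u v \<and> \<not> is_tree_comp ({1..n}, A') (comp_of ({1..n}, A') u)"
proof -
  obtain s where s: "s < t" "e = es ! s"
    using e \<open>t \<le> length es\<close> by (auto simp: in_set_conv_nth)
  have "proc_edges P n es (Suc s) \<subseteq> proc_edges P n es t"
    using s by (intro proc_edges_mono) simp
  with e s have "es ! s \<notin> proc_edges P n es (Suc s)" by blast
  with rejected_edge_closes_cycle[OF assms(1-3)] s \<open>t \<le> length es\<close>
  obtain u v where "e = {u, v}" "same_comp ({1..n}, proc_edges P n es s) u v"
    "\<not> is_tree_comp ({1..n}, proc_edges P n es s) (comp_of ({1..n}, proc_edges P n es s) u)"
    by (metis order.strict_trans2)
  moreover have "proc_edges P n es s \<subseteq> proc_edges P n es t"
    using s by (intro proc_edges_mono) simp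
  ultimately show ?thesis by blast
qed

theorem mainTheorem6:
  fixes P :: "graph set" and n :: nat and es :: "nat set list" and t :: nat
  assumes "good_class P"
    and "distinct es" and "set es = Kn_edges n"
    and "t \<in> {1..length es}"
  shows "R_rej P n es t \<le> excess (Gnt n es t)"
proof -
  have t: "t \<le> length es" using assms(4) by simp
  have "wf_graph ({1..n}, set (take t es))"
    using assms(3) by (auto simp: wf_graph_def Kn_edges_def verts_def edges_def
        dest!: in_set_takeD)
  then have "card {1..n} \<le> card (proc_edges P n es t) + num_tree_comps (Gnt n es t)"
    unfolding Gnt_def
  proof (rule card_verts_le_card_edges_add_num_tree_comps)
    show "proc_edges P n es t \<subseteq> set (take t es)" using proc_edges_subset_take[OF t] .
  qed (rule rejected_edges_close_cycles[OF assms(1-3) t])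
  moreover have "card (set (take t es)) = t"
    using assms(2) t by (simp add: distinct_card)
  ultimately show ?thesis
    by (simp add: R_rej_def excess_def Gnt_def verts_def edges_def)
qed

end
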